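(* Let $d\ge2$ and $\gamma>0$. For $N\ge c(\gamma)$, $P$-almost surely on the event $\{T_N<\gamma N^{2d}\}$ there exist $x_* = z_*e_{d+1}$ with $|z_*|\le N^{2d+1}$ and a $*$-path contained in $U\cap X_{[0,T_N]}$ starting at $x_*$ and ending in $S(x_*,[\sqrt N])$, where $U = \big[-2[\sqrt N],2[\sqrt N]\big]e_1 + \mathbb{Z}e_{d+1}$ (viewed as a subset of $E$).
   Context: $\mathbb{T}=(\mathbb{Z}/N\mathbb{Z})^d$, $E=\mathbb{T}\times\mathbb{Z}$, $P$ the law of simple random walk $X_\cdot$ on $E$ started uniformly on $\mathbb{T}\times\{0\}$; $X_{[0,n]} = \{X_0,\dots,X_n\}$. $e_1,\dots,e_{d+1}$ is the canonical basis (images in $E$, with $e_{d+1}$ the vertical direction). A finite $S\subset E$ disconnects $E$ if for large $M$, $\mathbb{T}\times(-\infty,-M]$ and $\mathbb{T}\times[M,\infty)$ are in distinct connected components of $E\setminus S$; $T_N = \inf\{n\ge0: X_{[0,n]}\text{ disconnects }E\}$. Two points are $*$-neighbors if their $\ell^\infty$-distance is 1; a $*$-path is a finite sequence of consecutive $*$-neighbors. $S(x,r)$ is the $\ell^\infty$-sphere of radius $r$ centered at $x$. $[\cdot]$ denotes integer part. *)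

theory Defs
  imports "HOL-Probability.Probability"
begin

text \<open>Points of E = (Z/NZ)^d x Z are pairs (v, z): v :: nat => int with v i in {0..N-1}
  for i < d (coordinate i of the torus, i = 0 corresponding to e_1) and v i = 0 for i >= d;
  z :: int is the vertical coordinate (direction e_{d+1}).\<close>

type_synonym pt = "(nat \<Rightarrow> int) \<times> int"

definition Tor :: "nat \<Rightarrow> nat \<Rightarrow> (nat \<Rightarrow> int) set" where
  "Tor N d = {v. (\<forall>i<d. 0 \<le> v i \<and> v i < int N) \<and> (\<forall>i\<ge>d. v i = 0)}"

definition Ecyl :: "nat \<Rightarrow> nat \<Rightarrow> pt set" where
  "Ecyl N d = Tor N d \<times> UNIV"

definition move :: "nat \<Rightarrow> nat \<Rightarrow> pt \<Rightarrow> nat \<Rightarrow> pt" where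
  "move N d x k =
     (if k < 2 * d then
        (let i = k div 2; s = (if even k then 1 else -1) in
          ((fst x)(i := (fst x i + s) mod int N), snd x))
      else if k = 2 * d then (fst x, snd x + 1)
      else (fst x, snd x - 1))"

definition adj :: "nat \<Rightarrow> nat \<Rightarrow> pt \<Rightarrow> pt \<Rightarrow> bool" where
  "adj N d x y \<longleftrightarrow> x \<in> Ecyl N d \<and> (\<exists>k<2 * d + 2. y = move N d x k)"

definition walk :: "nat \<Rightarrow> nat \<Rightarrow> pt \<times> nat stream \<Rightarrow> nat \<Rightarrow> pt" where
  "walk N d \<omega> n = fold (\<lambda>k x. move N d x k) (stake n (snd \<omega>)) (fst \<omega>)"

definition Pwalk :: "nat \<Rightarrow> nat \<Rightarrow> (pt \<times> nat stream) measure" where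
  "Pwalk N d = measure_pmf (pmf_of_set (Tor N d \<times> {0}))
      \<Otimes>\<^sub>M stream_space (measure_pmf (pmf_of_set {0..<2 * d + 2}))"

definition trace :: "nat \<Rightarrow> nat \<Rightarrow> pt \<times> nat stream \<Rightarrow> nat \<Rightarrow> pt set" where
  "trace N d \<omega> n = walk N d \<omega> ` {0..n}"

definition disconnects :: "nat \<Rightarrow> nat \<Rightarrow> pt set \<Rightarrow> bool" where
  "disconnects N d S \<longleftrightarrow>
     (\<exists>M0. \<forall>M\<ge>M0. \<forall>x y. x \<in> Ecyl N d - S \<and> snd x \<le> - M \<and> y \<in> Ecyl N d - S \<and> snd y \<ge> M
        \<longrightarrow> (x, y) \<notin> ({(a, b). a \<notin> S \<and> b \<notin> S \<and> adj N d a b})\<^sup>*)"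

definition TN :: "nat \<Rightarrow> nat \<Rightarrow> pt \<times> nat stream \<Rightarrow> enat" where
  "TN N d \<omega> = (if \<exists>n. disconnects N d (trace N d \<omega> n)
                 then enat (LEAST n. disconnects N d (trace N d \<omega> n)) else \<infinity>)"

definition tdist :: "nat \<Rightarrow> int \<Rightarrow> int \<Rightarrow> int" where
  "tdist N a b = min ((a - b) mod int N) ((b - a) mod int N)"

definition linf :: "nat \<Rightarrow> nat \<Rightarrow> pt \<Rightarrow> pt \<Rightarrow> int" where
  "linf N d x y = max (Max ({tdist N (fst x i) (fst y i) | i. i < d} \<union> {0})) \<bar>snd x - snd y\<bar>"

definition star_nb :: "nat \<Rightarrow> nat \<Rightarrow> pt \<Rightarrow> pt \<Rightarrow> bool" where
  "star_nb N d x y \<longleftrightarrow> x \<in> Ecyl N d \<and> y \<in> Ecyl N d \<and> linf N d x y = 1"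

definition star_path :: "nat \<Rightarrow> nat \<Rightarrow> pt list \<Rightarrow> bool" where
  "star_path N d p \<longleftrightarrow> p \<noteq> [] \<and> set p \<subseteq> Ecyl N d \<and>
     (\<forall>i. Suc i < length p \<longrightarrow> star_nb N d (p ! i) (p ! Suc i))"

definition sphere_inf :: "nat \<Rightarrow> nat \<Rightarrow> pt \<Rightarrow> int \<Rightarrow> pt set" where
  "sphere_inf N d x r = {y \<in> Ecyl N d. linf N d x y = r}"

definition isqrt :: "nat \<Rightarrow> int" where
  "isqrt N = \<lfloor>sqrt (real N)\<rfloor>"

definition Uset :: "nat \<Rightarrow> nat \<Rightarrow> pt set" where
  "Uset N d = {x \<in> Ecyl N d. (\<forall>i. i \<noteq> 0 \<longrightarrow> fst x i = 0) \<and>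
      (\<exists>k. \<bar>k\<bar> \<le> 2 * isqrt N \<and> fst x 0 = k mod int N)}"

definition vert :: "int \<Rightarrow> pt" where
  "vert z = ((\<lambda>_. 0), z)"

end

theory Submission
  imports Defs "HOL-Analysis.Jordan_Curve"
begin

text \<open>The walk starts at height 0, so at time T_N < gamma N^(2d) <= N^(2d+1) its trace S has
  height at most T_N. In the plane spanned by e_1 and e_(d+1), block those cells of the box
  [0, r] x [-M, M] (r = [sqrt N], M beyond the height of S) that lie in S. By planar duality,
  either the free cells join the bottom row to the top row by a nearest-neighbour path, which
  would be a path in E avoiding S from far below to far above, contradicting that S
  disconnects; or the blocked cells join the left column to the right column by a *-path.
  Cut where it reaches l-infinity distance r from its start x_* on the vertical axis, that
  *-path is the one required. The duality is derived from Janiszewski's theorem, applied to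
  unions of closed unit squares centred at the cells.\<close>

section \<open>Closed unit squares around lattice cells\<close>

definition cell_square :: "int \<times> int \<Rightarrow> complex set" where
  "cell_square c = cbox (Complex (of_int (fst c) - 1/2) (of_int (snd c) - 1/2))
                        (Complex (of_int (fst c) + 1/2) (of_int (snd c) + 1/2))"

definition tile :: "(int \<times> int) set \<Rightarrow> complex set" where
  "tile C = (\<Union>c\<in>C. cell_square c)"

lemma mem_cell_square:
  "p \<in> cell_square c \<longleftrightarrow>
     of_int (fst c) - 1/2 \<le> Re p \<and> Re p \<le> of_int (fst c) + 1/2 \<and>
     of_int (snd c) - 1/2 \<le> Im p \<and> Im p \<le> of_int (snd c) + 1/2"
  by (simp add: cell_square_def in_cbox_complex_iff)

lemma compact_tile: "finite C \<Longrightarrow> compact (tile C)"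
  unfolding tile_def cell_square_def by (intro compact_UN) auto

lemma closed_tile: "finite C \<Longrightarrow> closed (tile C)"
  by (simp add: compact_imp_closed compact_tile)

lemma cell_squares_meet:
  assumes "p \<in> cell_square c" "p \<in> cell_square c'"
  shows "\<bar>fst c - fst c'\<bar> \<le> 1" "\<bar>snd c - snd c'\<bar> \<le> 1"
proof -
  have "\<bar>of_int (fst c) - of_int (fst c') :: real\<bar> \<le> 1"
    and "\<bar>of_int (snd c) - of_int (snd c') :: real\<bar> \<le> 1"
    using assms unfolding mem_cell_square by linarith+
  then show "\<bar>fst c - fst c'\<bar> \<le> 1" "\<bar>snd c - snd c'\<bar> \<le> 1"
    by linarith+
qed

lemma cell_square_swap:
  "p \<in> cell_square (k, z) \<Longrightarrow> p \<in> cell_square (k', z') \<Longrightarrow> p \<in> cell_square (k', z)"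
  by (simp add: mem_cell_square)

lemma common_unit_interval:
  fixes x :: real
  obtains \<delta> where "\<delta> > 0" "\<And>y. \<bar>y - x\<bar> < \<delta> \<Longrightarrow>
    \<exists>k::int. x \<in> {of_int k - 1/2..of_int k + 1/2} \<and> y \<in> {of_int k - 1/2..of_int k + 1/2}"
proof
  define kp km where "kp = \<lfloor>x + 1/2\<rfloor>" and "km = \<lceil>x - 1/2\<rceil>"
  have kp: "of_int kp \<le> x + 1/2" "x + 1/2 < of_int kp + 1"
    and km: "x - 1/2 \<le> of_int km" "of_int km < x + 1/2"
    unfolding kp_def km_def by linarith+
  then show "min (of_int kp + 1/2 - x) (x - of_int km + 1/2) > 0"
    by simp
  fix y assume y: "\<bar>y - x\<bar> < min (of_int kp + 1/2 - x) (x - of_int km + 1/2)"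
  show "\<exists>k::int. x \<in> {of_int k - 1/2..of_int k + 1/2} \<and> y \<in> {of_int k - 1/2..of_int k + 1/2}"
  proof (cases "x \<le> y")
    case True
    then show ?thesis using y kp by (intro exI[of _ kp]) (auto simp: abs_less_iff)
  next
    case False
    then show ?thesis using y km by (intro exI[of _ km]) (auto simp: abs_less_iff)
  qed
qed

lemma interior_if_cell_squares_subset:
  assumes "\<And>c. p \<in> cell_square c \<Longrightarrow> cell_square c \<subseteq> Q"
  shows "p \<in> interior Q"
proof -
  obtain \<delta>1 where \<delta>1: "\<delta>1 > 0" "\<And>y. \<bar>y - Re p\<bar> < \<delta>1 \<Longrightarrow>
    \<exists>k::int. Re p \<in> {of_int k - 1/2..of_int k + 1/2} \<and> y \<in> {of_int k - 1/2..of_int k + 1/2}"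
    using common_unit_interval[of "Re p"] by metis
  obtain \<delta>2 where \<delta>2: "\<delta>2 > 0" "\<And>y. \<bar>y - Im p\<bar> < \<delta>2 \<Longrightarrow>
    \<exists>k::int. Im p \<in> {of_int k - 1/2..of_int k + 1/2} \<and> y \<in> {of_int k - 1/2..of_int k + 1/2}"
    using common_unit_interval[of "Im p"] by metis
  have "ball p (min \<delta>1 \<delta>2) \<subseteq> Q"
  proof
    fix q assume "q \<in> ball p (min \<delta>1 \<delta>2)"
    then have "cmod (q - p) < min \<delta>1 \<delta>2" by (simp add: dist_norm norm_minus_commute)
    then have "\<bar>Re q - Re p\<bar> < \<delta>1" "\<bar>Im q - Im p\<bar> < \<delta>2"
      using abs_Re_le_cmod[of "q - p"] abs_Im_le_cmod[of "q - p"] by auto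
    then obtain k z :: int where
      "Re p \<in> {of_int k - 1/2..of_int k + 1/2}" "Re q \<in> {of_int k - 1/2..of_int k + 1/2}"
      "Im p \<in> {of_int z - 1/2..of_int z + 1/2}" "Im q \<in> {of_int z - 1/2..of_int z + 1/2}"
      using \<delta>1(2) \<delta>2(2) by meson
    then have "p \<in> cell_square (k, z)" "q \<in> cell_square (k, z)"
      unfolding mem_cell_square by simp_all
    then show "q \<in> Q" using assms by blast
  qed
  moreover have "min \<delta>1 \<delta>2 > 0" using \<delta>1(1) \<delta>2(1) by simp
  ultimately show ?thesis unfolding mem_interior by blast
qed

lemma connected_component_cbox:
  fixes a b :: "'a::euclidean_space"
  shows "cbox a b \<subseteq> S \<Longrightarrow> x \<in> cbox a b \<Longrightarrow> y \<in> cbox a b \<Longrightarrow> connected_component S x y"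
  by (intro connected_componentI[OF convex_connected]) auto

section \<open>Crossings of a box of cells\<close>

definition cell_box :: "int \<Rightarrow> int \<Rightarrow> (int \<times> int) set" where
  "cell_box w M = {0..w} \<times> {-M..M}"

definition lattice_adj :: "int \<times> int \<Rightarrow> int \<times> int \<Rightarrow> bool" where
  "lattice_adj c c' \<longleftrightarrow> \<bar>fst c - fst c'\<bar> + \<bar>snd c - snd c'\<bar> = 1"

definition star_adj :: "int \<times> int \<Rightarrow> int \<times> int \<Rightarrow> bool" where
  "star_adj c c' \<longleftrightarrow> c \<noteq> c' \<and> \<bar>fst c - fst c'\<bar> \<le> 1 \<and> \<bar>snd c - snd c'\<bar> \<le> 1"

definition lattice_rel :: "(int \<times> int) set \<Rightarrow> ((int \<times> int) \<times> (int \<times> int)) set" where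
  "lattice_rel W = {(c, c'). c \<in> W \<and> c' \<in> W \<and> lattice_adj c c'}"

definition star_rel :: "(int \<times> int) set \<Rightarrow> ((int \<times> int) \<times> (int \<times> int)) set" where
  "star_rel B = {(c, c'). c \<in> B \<and> c' \<in> B \<and> star_adj c c'}"

lemma finite_cell_box: "finite (cell_box w M)"
  by (simp add: cell_box_def)

lemma star_adj_if_cell_squares_meet:
  "p \<in> cell_square c \<Longrightarrow> p \<in> cell_square c' \<Longrightarrow> c \<noteq> c' \<Longrightarrow> star_adj c c'"
  using cell_squares_meet unfolding star_adj_def by blast

lemma frontier_tile_exit:
  assumes "finite R"
    and R_closed: "\<And>c c'. c \<in> R \<Longrightarrow> c' \<in> W \<Longrightarrow> lattice_adj c c' \<Longrightarrow> c' \<in> R"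
    and p: "p \<in> frontier (tile R)"
  obtains c e where "c \<in> R" "e \<notin> W" "p \<in> cell_square c" "p \<in> cell_square e"
proof -
  have "p \<in> tile R"
    using p closed_tile[OF \<open>finite R\<close>] frontier_subset_closed by blast
  then obtain c where c: "c \<in> R" "p \<in> cell_square c"
    unfolding tile_def by blast
  have step: "c' \<in> R" if "c \<in> R" "c' \<in> W" "\<bar>fst c - fst c'\<bar> + \<bar>snd c - snd c'\<bar> \<le> 1" for c c'
    using that R_closed[of c c'] unfolding lattice_adj_def
    by (cases "c = c'") (auto simp: prod_eq_iff)
  have "\<exists>e. e \<notin> W \<and> p \<in> cell_square e"
  proof (rule ccontr)
    assume "\<nexists>e. e \<notin> W \<and> p \<in> cell_square e"
    then have W: "e \<in> W" if "p \<in> cell_square e" for e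
      using that by blast
    have "p \<in> interior (tile R)"
    proof (rule interior_if_cell_squares_subset)
      fix e assume e: "p \<in> cell_square e"
      \<comment> \<open>reach e from c through the cell (fst e, snd c), changing one coordinate at a time\<close>
      have ce: "p \<in> cell_square (fst e, snd c)"
        using cell_square_swap[of p "fst c" "snd c" "fst e" "snd e"] c(2) e by simp
      have "(fst e, snd c) \<in> R"
        using step[OF c(1) W[OF ce]] cell_squares_meet[OF c(2) e] by simp
      then have "e \<in> R"
        using step[OF _ W[OF e]] cell_squares_meet[OF ce e] by simp
      then show "cell_square e \<subseteq> tile R"
        unfolding tile_def by blast
    qed
    then show False
      using p by (simp add: frontier_def)
  qed
  then show ?thesis
    using c that by blast
qed

locale no_blocked_crossing =
  fixes w M :: int and Bl B :: "(int \<times> int) set"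
  assumes w_nonneg: "0 \<le> w" and M_nonneg: "0 \<le> M"
    and Bl_box: "Bl \<subseteq> cell_box w M"
    and Bl_inner_rows: "\<And>c. c \<in> Bl \<Longrightarrow> \<bar>snd c\<bar> < M"
    and B_blocked: "B \<subseteq> Bl"
    and left_column_in_B: "\<And>c. c \<in> Bl \<Longrightarrow> fst c = 0 \<Longrightarrow> c \<in> B"
    and B_star_closed: "\<And>c c'. c \<in> B \<Longrightarrow> c' \<in> Bl \<Longrightarrow> star_adj c c' \<Longrightarrow> c' \<in> B"
    and B_misses_right_column: "\<And>c. c \<in> B \<Longrightarrow> fst c \<noteq> w"
begin

text \<open>Janiszewski's theorem is applied to the black barrier (the squares of B and a wall left
  of the box) and the outer barrier (everything outside the box and the squares of Bl - B):
  they meet only in a small rectangle below the wall, and the centres of the bottom and top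
  cells of column 0 can be joined outside each of them, hence outside their union. A connected
  set joining them there must cross the frontier of the white cluster of the bottom cell, which
  is impossible unless that cluster reaches the top row.\<close>

definition left_wall :: "complex set" where
  "left_wall = cbox (Complex (-1) (- of_int M - 1)) (Complex (-1/2) (of_int M))"

definition black_barrier :: "complex set" where
  "black_barrier = left_wall \<union> tile B"

definition outer_barrier :: "complex set" where
  "outer_barrier = {q. Im q \<le> - of_int M - 1/2} \<union> {q. of_int M + 1/2 \<le> Im q}
     \<union> {q. of_int w + 1/2 \<le> Re q} \<union> tile (Bl - B)"

lemma finite_Bl: "finite Bl"
  using Bl_box finite_cell_box by (rule finite_subset)

lemma tile_B_bounds:
  assumes "p \<in> tile B"
  shows "- 1/2 \<le> Re p" "Re p \<le> of_int w - 1/2" "\<bar>Im p\<bar> \<le> of_int M - 1/2"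
proof -
  obtain c where c: "c \<in> B" "p \<in> cell_square c"
    using assms unfolding tile_def by blast
  then have "0 \<le> fst c" "fst c \<le> w - 1" "\<bar>snd c\<bar> \<le> M - 1"
    using B_blocked Bl_box Bl_inner_rows B_misses_right_column[OF c(1)]
    by (force simp: cell_box_def)+
  then show "- 1/2 \<le> Re p" "Re p \<le> of_int w - 1/2" "\<bar>Im p\<bar> \<le> of_int M - 1/2"
    using c(2) unfolding mem_cell_square by linarith+
qed

lemma tile_unreached_bounds:
  assumes "p \<in> tile (Bl - B)"
  shows "1/2 \<le> Re p" "\<bar>Im p\<bar> \<le> of_int M - 1/2"
proof -
  obtain c where c: "c \<in> Bl" "c \<notin> B" "p \<in> cell_square c"
    using assms unfolding tile_def by blast
  then have "1 \<le> fst c" "\<bar>snd c\<bar> \<le> M - 1"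
    using Bl_box Bl_inner_rows left_column_in_B[of c] by (force simp: cell_box_def)+
  then show "1/2 \<le> Re p" "\<bar>Im p\<bar> \<le> of_int M - 1/2"
    using c(3) unfolding mem_cell_square by linarith+
qed

lemma tile_B_disjoint_unreached: "tile B \<inter> tile (Bl - B) = {}"
  unfolding tile_def
  using B_star_closed star_adj_if_cell_squares_meet B_blocked by blast

lemma compact_black_barrier: "compact black_barrier"
  unfolding black_barrier_def left_wall_def
  using finite_Bl B_blocked finite_subset by (intro compact_Un compact_tile) auto

lemma closed_outer_barrier: "closed outer_barrier"
  unfolding outer_barrier_def
  by (intro closed_Un closed_tile closed_halfspace_Im_le closed_halfspace_Im_ge
      closed_halfspace_Re_ge) (simp add: finite_Bl)

lemma black_barrier_Int_outer_barrier:
  "black_barrier \<inter> outer_barrier =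
     cbox (Complex (-1) (- of_int M - 1)) (Complex (-1/2) (- of_int M - 1/2))"
proof -
  have "tile B \<inter> outer_barrier = {}"
    using tile_B_bounds tile_B_disjoint_unreached unfolding outer_barrier_def
    by (fastforce simp: abs_le_iff)
  moreover have "left_wall \<inter> tile (Bl - B) = {}"
    using tile_unreached_bounds(1) unfolding left_wall_def by (force simp: in_cbox_complex_iff)
  moreover have "left_wall \<inter> outer_barrier =
      cbox (Complex (-1) (- of_int M - 1)) (Complex (-1/2) (- of_int M - 1/2))"
    using calculation(2) w_nonneg M_nonneg
    unfolding outer_barrier_def left_wall_def by (auto simp: in_cbox_complex_iff)
  ultimately show ?thesis
    unfolding black_barrier_def by blast
qed

lemma connected_component_outside_black_barrier:
  "connected_component (- black_barrier) (Complex 0 (- of_int M)) (Complex 0 (of_int M))"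
proof -
  have outside: "q \<notin> black_barrier"
    if "0 \<le> Re q" "Re q \<le> of_int w" "\<bar>Im q\<bar> = of_int M \<or> Re q = of_int w" for q
    using that tile_B_bounds[of q] unfolding black_barrier_def left_wall_def
    by (auto simp: in_cbox_complex_iff)
  let ?a = "Complex 0 (- of_int M)" and ?a' = "Complex (of_int w) (- of_int M)"
    and ?b = "Complex 0 (of_int M)" and ?b' = "Complex (of_int w) (of_int M)"
  have "connected_component (- black_barrier) ?a ?a'"
    using outside w_nonneg M_nonneg
    by (intro connected_component_cbox[of ?a ?a']) (auto simp: in_cbox_complex_iff)
  moreover have "connected_component (- black_barrier) ?a' ?b'"
    using outside w_nonneg M_nonneg
    by (intro connected_component_cbox[of ?a' ?b']) (auto simp: in_cbox_complex_iff)
  moreover have "connected_component (- black_barrier) ?b' ?b"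
    using outside w_nonneg M_nonneg
    by (intro connected_component_cbox[of ?b ?b']) (auto simp: in_cbox_complex_iff)
  ultimately show ?thesis
    by (meson connected_component_trans)
qed

lemma connected_component_outside_outer_barrier:
  "connected_component (- outer_barrier) (Complex 0 (- of_int M)) (Complex 0 (of_int M))"
  using tile_unreached_bounds(1) w_nonneg M_nonneg unfolding outer_barrier_def
  by (intro connected_component_cbox[of "Complex 0 (- of_int M)" "Complex 0 (of_int M)"])
    (force simp: in_cbox_complex_iff)+

lemma connected_component_outside_barriers:
  "connected_component (- (black_barrier \<union> outer_barrier))
     (Complex 0 (- of_int M)) (Complex 0 (of_int M))"
  using compact_black_barrier closed_outer_barrier
    connected_component_outside_black_barrier connected_component_outside_outer_barrier
  by (intro Janiszewski) (simp_all add: black_barrier_Int_outer_barrier convex_connected)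

lemma exit_point_in_barriers:
  assumes c: "c \<in> cell_box w M" "snd c \<noteq> M" and e: "e \<notin> cell_box w M - Bl"
    and p: "p \<in> cell_square c" "p \<in> cell_square e"
  shows "p \<in> black_barrier \<union> outer_barrier"
proof (cases "e \<in> Bl")
  case True
  then show ?thesis
    using p(2) unfolding black_barrier_def outer_barrier_def tile_def by blast
next
  case False
  have bounds: "0 \<le> fst c" "fst c \<le> w" "- M \<le> snd c" "snd c \<le> M - 1"
    "\<bar>fst c - fst e\<bar> \<le> 1" "\<bar>snd c - snd e\<bar> \<le> 1"
    using c cell_squares_meet[OF p] by (auto simp: cell_box_def)
  consider "fst e < 0" | "w < fst e" | "snd e < - M" | "M < snd e"
    using e False by (force simp: cell_box_def mem_Times_iff)
  then show ?thesis
  proof cases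
    case 1
    then have "fst e \<le> -1" by simp
    then have "p \<in> left_wall"
      using p bounds unfolding left_wall_def in_cbox_complex_iff mem_cell_square
      by (simp only: atLeastAtMost_iff complex.sel) linarith
    then show ?thesis
      unfolding black_barrier_def by blast
  next
    case 2
    then have "w + 1 \<le> fst e" by simp
    then have "of_int w + 1/2 \<le> Re p"
      using p(2) unfolding mem_cell_square by linarith
    then show ?thesis
      unfolding outer_barrier_def by blast
  next
    case 3
    then have "snd e \<le> - M - 1" by simp
    then have "Im p \<le> - of_int M - 1/2"
      using p(2) unfolding mem_cell_square by linarith
    then show ?thesis
      unfolding outer_barrier_def by blast
  next
    case 4
    then have "M + 1 \<le> snd e" by simp
    then have "of_int M + 1/2 \<le> Im p"
      using p(2) unfolding mem_cell_square by linarith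
    then show ?thesis
      unfolding outer_barrier_def by blast
  qed
qed

lemma white_cluster_reaches_top:
  assumes R_white: "R \<subseteq> cell_box w M - Bl" and bottom: "(0, - M) \<in> R"
    and R_closed: "\<And>c c'. c \<in> R \<Longrightarrow> c' \<in> cell_box w M - Bl \<Longrightarrow> lattice_adj c c' \<Longrightarrow> c' \<in> R"
  shows "\<exists>c\<in>R. snd c = M"
proof (rule ccontr)
  assume top: "\<not> (\<exists>c\<in>R. snd c = M)"
  obtain K where K: "connected K" "K \<subseteq> - (black_barrier \<union> outer_barrier)"
    "Complex 0 (- of_int M) \<in> K" "Complex 0 (of_int M) \<in> K"
    using connected_component_outside_barriers unfolding connected_component_def by blast
  have "finite R"
    using R_white finite_cell_box finite_subset by blast
  have "Complex 0 (- of_int M) \<in> tile R"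
    unfolding tile_def by (rule UN_I[OF bottom]) (simp add: mem_cell_square)
  moreover have "Complex 0 (of_int M) \<notin> tile R"
  proof
    assume "Complex 0 (of_int M) \<in> tile R"
    then obtain c where "c \<in> R" "Complex 0 (of_int M) \<in> cell_square c"
      unfolding tile_def by blast
    moreover from this(2) have "snd c = M"
      unfolding mem_cell_square by simp
    ultimately show False
      using top by blast
  qed
  ultimately have "K \<inter> tile R \<noteq> {}" "K - tile R \<noteq> {}"
    using K(3,4) by auto
  then have "K \<inter> frontier (tile R) \<noteq> {}"
    by (rule connected_Int_frontier[OF K(1)])
  then obtain p where p: "p \<in> K" "p \<in> frontier (tile R)"
    by blast
  obtain c e where ce: "c \<in> R" "e \<notin> cell_box w M - Bl"
      "p \<in> cell_square c" "p \<in> cell_square e"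
    by (rule frontier_tile_exit[OF \<open>finite R\<close> R_closed p(2)])
  have "c \<in> cell_box w M" "snd c \<noteq> M"
    using ce(1) R_white top by auto
  with ce(2-4) have "p \<in> black_barrier \<union> outer_barrier"
    by (intro exit_point_in_barriers)
  then show False
    using p(1) K(2) by blast
qed

end

lemma crossing_dichotomy:
  fixes w M :: int
  assumes "0 \<le> w" "0 \<le> M" and Bl_box: "Bl \<subseteq> cell_box w M"
    and Bl_inner_rows: "\<And>c. c \<in> Bl \<Longrightarrow> \<bar>snd c\<bar> < M"
  shows "(\<exists>c. ((0, - M), c) \<in> (lattice_rel (cell_box w M - Bl))\<^sup>* \<and> snd c = M) \<or>
         (\<exists>c0 c. c0 \<in> Bl \<and> fst c0 = 0 \<and> (c0, c) \<in> (star_rel Bl)\<^sup>* \<and> fst c = w)"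
proof (rule disjCI)
  assume no_crossing: "\<not> (\<exists>c0 c. c0 \<in> Bl \<and> fst c0 = 0 \<and> (c0, c) \<in> (star_rel Bl)\<^sup>* \<and> fst c = w)"
  define B where "B = (star_rel Bl)\<^sup>* `` {c \<in> Bl. fst c = 0}"
  have "B \<subseteq> (star_rel Bl)\<^sup>* `` Bl"
    unfolding B_def by blast
  also have "\<dots> = Bl"
    by (rule Image_closed_trancl) (auto simp: star_rel_def)
  finally have "B \<subseteq> Bl" .
  interpret no_blocked_crossing w M Bl B
  proof
    show "c' \<in> B" if "c \<in> B" "c' \<in> Bl" "star_adj c c'" for c c'
      using that \<open>B \<subseteq> Bl\<close> unfolding B_def star_rel_def by (blast intro: rtrancl_into_rtrancl)
    show "fst c \<noteq> w" if "c \<in> B" for c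
      using that no_crossing unfolding B_def by blast
  qed (use assms \<open>B \<subseteq> Bl\<close> in \<open>auto simp: B_def\<close>)
  define W where "W = cell_box w M - Bl"
  have bottom: "(0, - M) \<in> W"
    using assms Bl_inner_rows[of "(0, - M)"] by (auto simp: W_def cell_box_def)
  have "(lattice_rel W)\<^sup>* `` {(0, - M)} \<subseteq> (lattice_rel W)\<^sup>* `` W"
    using bottom by blast
  also have "\<dots> = W"
    by (rule Image_closed_trancl) (auto simp: lattice_rel_def)
  finally have "\<exists>c \<in> (lattice_rel W)\<^sup>* `` {(0, - M)}. snd c = M"
    using bottom unfolding W_def
    by (intro white_cluster_reaches_top) (auto simp: lattice_rel_def intro: rtrancl_into_rtrancl)
  then show "\<exists>c. ((0, - M), c) \<in> (lattice_rel (cell_box w M - Bl))\<^sup>* \<and> snd c = M"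
    unfolding W_def by blast
qed

lemma rtrancl_reaches_level:
  fixes f :: "'a \<Rightarrow> int"
  assumes "(a, b) \<in> r\<^sup>*" "f a \<le> t" "t \<le> f b"
    and slow: "\<And>x y. (x, y) \<in> r \<Longrightarrow> f y \<le> f x + 1"
  shows "\<exists>c. (a, c) \<in> r\<^sup>* \<and> f c = t"
  using assms(1,3)
proof (induction rule: rtrancl_induct)
  case base
  then show ?case
    using assms(2) by auto
next
  case (step y z)
  show ?case
  proof (cases "t \<le> f y")
    case True
    then show ?thesis
      using step.IH by blast
  next
    case False
    then have "f z = t"
      using slow[OF step.hyps(2)] step.prems by linarith
    then show ?thesis
      using step.hyps by (blast intro: rtrancl_into_rtrancl)
  qed
qed

lemma rtrancl_imp_path_list:
  assumes "(a, b) \<in> r\<^sup>*"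
  obtains ps where "ps \<noteq> []" "hd ps = a" "last ps = b" "set ps \<subseteq> insert a (Range r)"
    "\<And>i. Suc i < length ps \<Longrightarrow> (ps ! i, ps ! Suc i) \<in> r"
proof -
  obtain n where "(a, b) \<in> r ^^ n"
    using rtrancl_imp_relpow[OF assms] by blast
  then obtain f where f: "f 0 = a" "f n = b" "\<And>i. i < n \<Longrightarrow> (f i, f (Suc i)) \<in> r"
    unfolding relpow_fun_conv by blast
  define ps where "ps = map f [0..<Suc n]"
  have len: "length ps = Suc n"
    by (simp add: ps_def)
  have nth: "ps ! i = f i" if "i \<le> n" for i
    using that by (simp add: ps_def nth_map_upt del: upt_Suc)
  show thesis
  proof (rule that)
    show "ps \<noteq> []"
      using len by auto
    then show "hd ps = a" "last ps = b"
      using nth[of 0] nth[of n] len f(1,2) by (simp_all add: hd_conv_nth last_conv_nth)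
    have "f i \<in> insert a (Range r)" if "i \<le> n" for i
      using that f(1) f(3)[of "i - 1"] by (cases i) auto
    then show "set ps \<subseteq> insert a (Range r)"
      by (fastforce simp: ps_def less_Suc_eq_le simp del: upt_Suc)
    show "(ps ! i, ps ! Suc i) \<in> r" if "Suc i < length ps" for i
      using that nth f(3) len by simp
  qed
qed

section \<open>The plane spanned by e_1 and e_(d+1)\<close>

definition slice_pt :: "int \<times> int \<Rightarrow> pt" where
  "slice_pt c = ((\<lambda>i. if i = 0 then fst c else 0), snd c)"

lemma snd_slice_pt [simp]: "snd (slice_pt c) = snd c"
  by (simp add: slice_pt_def)

lemma slice_pt_in_Ecyl:
  "1 \<le> d \<Longrightarrow> 0 \<le> fst c \<Longrightarrow> fst c < int N \<Longrightarrow> slice_pt c \<in> Ecyl N d"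
  unfolding slice_pt_def Ecyl_def Tor_def by auto

lemma slice_pt_in_Uset:
  "1 \<le> d \<Longrightarrow> 0 \<le> fst c \<Longrightarrow> fst c \<le> 2 * isqrt N \<Longrightarrow> fst c < int N \<Longrightarrow>
    slice_pt c \<in> Uset N d"
  unfolding Uset_def using slice_pt_in_Ecyl[of d c N]
  by (auto simp: slice_pt_def intro!: exI[of _ "fst c"])

lemma slice_pt_vert: "slice_pt (0, z) = vert z"
  unfolding slice_pt_def vert_def by auto

lemma adj_slice_pt:
  assumes "1 \<le> d" "0 \<le> fst c" "0 \<le> fst c'" "fst c < int N" "fst c' < int N" "lattice_adj c c'"
  shows "adj N d (slice_pt c) (slice_pt c')"
proof -
  obtain k z k' z' where c: "c = (k, z)" "c' = (k', z')"
    by force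
  have "\<bar>k - k'\<bar> + \<bar>z - z'\<bar> = 1"
    using assms(6) by (simp add: lattice_adj_def c)
  then consider "k' = k + 1" "z' = z" | "k' = k - 1" "z' = z"
    | "k' = k" "z' = z + 1" | "k' = k" "z' = z - 1"
    by arith
  then have "\<exists>m < 2 * d + 2. slice_pt c' = move N d (slice_pt c) m"
  proof cases
    case 1
    then show ?thesis
      using assms by (intro exI[of _ 0]) (auto simp: c slice_pt_def move_def fun_eq_iff)
  next
    case 2
    then show ?thesis
      using assms by (intro exI[of _ 1]) (auto simp: c slice_pt_def move_def fun_eq_iff)
  next
    case 3
    then show ?thesis
      by (intro exI[of _ "2 * d"]) (auto simp: c slice_pt_def move_def)
  next
    case 4
    then show ?thesis
      by (intro exI[of _ "2 * d + 1"]) (auto simp: c slice_pt_def move_def)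
  qed
  then show ?thesis
    unfolding adj_def using slice_pt_in_Ecyl assms by blast
qed

lemma tdist_eq_abs:
  assumes "2 * \<bar>a - b\<bar> \<le> int N"
  shows "tdist N a b = \<bar>a - b\<bar>"
proof -
  have "min (D mod int N) ((- D) mod int N) = D" if "0 \<le> D" "2 * D \<le> int N" for D
  proof (cases "D = 0")
    case False
    then have "D mod int N = D"
      using that by simp
    then show ?thesis
      using that False by (simp add: zmod_zminus1_eq_if)
  qed simp
  from this[of "a - b"] this[of "b - a"] show ?thesis
    using assms unfolding tdist_def by (cases "b \<le> a") (simp_all add: min.commute)
qed

lemma linf_slice_pt:
  assumes "1 \<le> d" "2 * \<bar>fst c - fst c'\<bar> \<le> int N"
  shows "linf N d (slice_pt c) (slice_pt c') = max \<bar>fst c - fst c'\<bar> \<bar>snd c - snd c'\<bar>"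
proof -
  have "{tdist N (fst (slice_pt c) i) (fst (slice_pt c') i) | i. i < d} \<union> {0} =
      {\<bar>fst c - fst c'\<bar>, 0}"
    using assms tdist_eq_abs[OF assms(2)] tdist_eq_abs[of 0 0 N]
    unfolding slice_pt_def by (auto intro!: exI[of _ 0])
  then show ?thesis
    unfolding linf_def by (simp add: slice_pt_def)
qed

lemma star_path_map_slice_pt:
  assumes d: "1 \<le> d" and N: "2 \<le> N" and "ps \<noteq> []"
    and cols: "\<And>c. c \<in> set ps \<Longrightarrow> 0 \<le> fst c \<and> fst c < int N"
    and steps: "\<And>i. Suc i < length ps \<Longrightarrow> star_adj (ps ! i) (ps ! Suc i)"
  shows "star_path N d (map slice_pt ps)"
  unfolding star_path_def
proof (intro conjI allI impI)
  show "map slice_pt ps \<noteq> []"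
    using \<open>ps \<noteq> []\<close> by simp
  show "set (map slice_pt ps) \<subseteq> Ecyl N d"
    using cols slice_pt_in_Ecyl[OF d] by auto
  fix i assume i: "Suc i < length (map slice_pt ps)"
  then have "star_adj (ps ! i) (ps ! Suc i)"
    using steps by simp
  then have "max \<bar>fst (ps ! i) - fst (ps ! Suc i)\<bar> \<bar>snd (ps ! i) - snd (ps ! Suc i)\<bar> = 1"
    and "2 * \<bar>fst (ps ! i) - fst (ps ! Suc i)\<bar> \<le> int N"
    using N unfolding star_adj_def prod_eq_iff by auto
  then have "linf N d (slice_pt (ps ! i)) (slice_pt (ps ! Suc i)) = 1"
    by (simp add: linf_slice_pt[OF d])
  moreover have "slice_pt (ps ! j) \<in> Ecyl N d" if "j < length ps" for j
    using that cols[OF nth_mem] slice_pt_in_Ecyl[OF d] by blast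
  ultimately show "star_nb N d (map slice_pt ps ! i) (map slice_pt ps ! Suc i)"
    using i unfolding star_nb_def by simp
qed

definition strip_cells :: "int \<Rightarrow> pt set \<Rightarrow> (int \<times> int) set" where
  "strip_cells r S = {c. 0 \<le> fst c \<and> fst c \<le> r \<and> slice_pt c \<in> S}"

lemma walk_0: "walk N d \<omega> 0 = fst \<omega>"
  by (simp add: walk_def)

lemma walk_Suc: "walk N d \<omega> (Suc j) = move N d (walk N d \<omega> j) (snd \<omega> !! j)"
  by (simp add: walk_def stake_Suc del: stake.simps)

lemma abs_snd_walk_le:
  assumes "snd (fst \<omega>) = 0"
  shows "\<bar>snd (walk N d \<omega> j)\<bar> \<le> int j"
proof (induction j)
  case 0
  then show ?case
    using assms by (simp add: walk_0)
next
  case (Suc j)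
  have "\<bar>snd (move N d x k) - snd x\<bar> \<le> 1" for x k
    by (simp add: move_def Let_def)
  then have "\<bar>snd (walk N d \<omega> (Suc j)) - snd (walk N d \<omega> j)\<bar> \<le> 1"
    unfolding walk_Suc .
  then show ?case
    using Suc.IH by linarith
qed

lemma abs_snd_trace_le:
  assumes "snd (fst \<omega>) = 0" "x \<in> trace N d \<omega> n"
  shows "\<bar>snd x\<bar> \<le> int n"
proof -
  obtain j where "j \<le> n" "x = walk N d \<omega> j"
    using assms(2) unfolding trace_def by auto
  then show ?thesis
    using abs_snd_walk_le[OF assms(1), of N d j] by simp
qed

lemma AE_Pwalk_start_height:
  assumes "0 < N"
  shows "AE \<omega> in Pwalk N d. snd (fst \<omega>) = 0"
proof -
  let ?M1 = "measure_pmf (pmf_of_set (Tor N d \<times> {0::int}))"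
  let ?M2 = "stream_space (measure_pmf (pmf_of_set {0..<2 * d + 2}))"
  have "(\<lambda>_. 0) \<in> Tor N d"
    using assms by (simp add: Tor_def)
  moreover have "finite (Tor N d)"
    by (rule finite_subset[OF _ finite_set_of_finite_funs[of "{..<d}" "{0..<int N}" 0]])
      (auto simp: Tor_def not_less)
  ultimately have "set_pmf (pmf_of_set (Tor N d \<times> {0::int})) = Tor N d \<times> {0}"
    by (intro set_pmf_of_set) auto
  then have start: "AE x in ?M1. snd x = 0"
    by (simp add: AE_measure_pmf_iff)
  interpret pair_sigma_finite ?M1 ?M2
    unfolding pair_sigma_finite_def
    by (simp add: prob_space_imp_sigma_finite prob_space_measure_pmf
        prob_space.prob_space_stream_space)
  have "{\<omega> \<in> space (?M1 \<Otimes>\<^sub>M ?M2). snd (fst \<omega>) = 0} = {x. snd x = 0} \<times> space ?M2"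
    by (auto simp: space_pair_measure)
  moreover have "AE x in ?M1. AE y in ?M2. snd (fst (x, y)) = 0"
    using start by eventually_elim simp
  ultimately have "AE \<omega> in ?M1 \<Otimes>\<^sub>M ?M2. snd (fst \<omega>) = 0"
    by (intro AE_pair_measure) simp_all
  then show ?thesis
    unfolding Pwalk_def .
qed

lemma TN_eq_enat_disconnects: "TN N d \<omega> = enat n \<Longrightarrow> disconnects N d (trace N d \<omega> n)"
  unfolding TN_def by (metis LeastI_ex enat.inject not_infinity_eq)

section \<open>Disconnecting sets contain long *-paths\<close>

lemma isqrt_bounds:
  assumes "4 \<le> N"
  shows "1 \<le> isqrt N" "2 * isqrt N \<le> int N"
proof -
  have "2 \<le> sqrt (real N)"
    using assms by (intro real_le_rsqrt) simp
  then have r2: "2 \<le> isqrt N"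
    unfolding isqrt_def by (simp add: le_floor_iff)
  have "real_of_int (isqrt N) ^ 2 \<le> sqrt (real N) ^ 2"
    using r2 unfolding isqrt_def by (intro power_mono) auto
  then have "isqrt N * isqrt N \<le> int N"
    by (simp add: power2_eq_square flip: of_int_mult of_int_le_iff)
  moreover have "2 * isqrt N \<le> isqrt N * isqrt N"
    using r2 by (intro mult_right_mono) auto
  ultimately show "1 \<le> isqrt N" "2 * isqrt N \<le> int N"
    using r2 by linarith+
qed

lemma disconnecting_set_has_star_crossing:
  fixes S :: "pt set" and r h :: int
  assumes d: "1 \<le> d" and r: "1 \<le> r" "2 * r \<le> int N"
    and disc: "disconnects N d S" and height: "\<And>x. x \<in> S \<Longrightarrow> \<bar>snd x\<bar> \<le> h"
  shows "\<exists>c0 c. c0 \<in> strip_cells r S \<and> fst c0 = 0 \<and>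
           (c0, c) \<in> (star_rel (strip_cells r S))\<^sup>* \<and> fst c = r"
proof -
  define E where "E = {(a, b). a \<notin> S \<and> b \<notin> S \<and> adj N d a b}"
  obtain M0 where M0: "\<And>x y. x \<in> Ecyl N d - S \<Longrightarrow> snd x \<le> - M0 \<Longrightarrow>
      y \<in> Ecyl N d - S \<Longrightarrow> M0 \<le> snd y \<Longrightarrow> (x, y) \<notin> E\<^sup>*"
    using disc unfolding disconnects_def E_def by blast
  \<comment> \<open>the box is taller than S, so S contains no cell of its top and bottom rows\<close>
  define M where "M = max M0 (max 0 (h + 1))"
  define Bl where "Bl = strip_cells r S"
  define W where "W = cell_box r M - Bl"
  have Bl_rows: "\<bar>snd c\<bar> < M" if "c \<in> Bl" for c
    using that height[of "slice_pt c"] unfolding Bl_def strip_cells_def M_def slice_pt_def by force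
  then have "Bl \<subseteq> cell_box r M"
    unfolding Bl_def strip_cells_def cell_box_def by force
  have W_outside: "slice_pt c \<in> Ecyl N d - S" if "c \<in> W" for c
    using that d r slice_pt_in_Ecyl[of d c N]
    unfolding W_def Bl_def strip_cells_def cell_box_def by force
  have "\<not> (\<exists>c. ((0, - M), c) \<in> (lattice_rel W)\<^sup>* \<and> snd c = M)"
  proof
    assume "\<exists>c. ((0, - M), c) \<in> (lattice_rel W)\<^sup>* \<and> snd c = M"
    then obtain c where c: "((0, - M), c) \<in> (lattice_rel W)\<^sup>*" "snd c = M"
      by blast
    have "(0, - M) \<in> W"
      using r Bl_rows[of "(0, - M)"] unfolding W_def cell_box_def M_def by force
    have to_E: "(slice_pt x, slice_pt y) \<in> E" if "(x, y) \<in> lattice_rel W" for x y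
      using that W_outside r unfolding lattice_rel_def E_def
      by (auto intro!: adj_slice_pt[OF d] simp: W_def cell_box_def)
    from c(1) have "(slice_pt (0, - M), slice_pt c) \<in> E\<^sup>* \<and> c \<in> W"
    proof (induction rule: rtrancl_induct)
      case (step y z)
      then show ?case
        using to_E[OF step.hyps(2)] by (auto simp: lattice_rel_def intro: rtrancl_into_rtrancl)
    qed (use \<open>(0, - M) \<in> W\<close> in simp)
    moreover have "M0 \<le> M"
      by (simp add: M_def)
    ultimately show False
      using M0[OF W_outside[OF \<open>(0, - M) \<in> W\<close>] _ W_outside[of c]] c(2) by auto
  qed
  then show ?thesis
    using crossing_dichotomy[of r M Bl] r Bl_rows \<open>Bl \<subseteq> cell_box r M\<close>
    unfolding W_def Bl_def M_def by auto
qed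

lemma star_crossing_truncated:
  assumes c0: "c0 \<in> Bl" and c: "(c0, c) \<in> (star_rel Bl)\<^sup>*"
    and r: "0 \<le> r" "fst c0 \<le> r" "r \<le> fst c"
  obtains ps where "ps \<noteq> []" "hd ps = c0" "set ps \<subseteq> Bl"
    "\<And>i. Suc i < length ps \<Longrightarrow> star_adj (ps ! i) (ps ! Suc i)"
    "max (fst (last ps)) \<bar>snd (last ps) - snd c0\<bar> = r"
proof -
  \<comment> \<open>along a *-path this distance grows by at most 1 per step\<close>
  define dist0 where "dist0 e = max (fst e) \<bar>snd e - snd c0\<bar>" for e
  have "\<exists>e. (c0, e) \<in> (star_rel Bl)\<^sup>* \<and> dist0 e = r"
  proof (rule rtrancl_reaches_level[OF c])
    show "dist0 y \<le> dist0 x + 1" if "(x, y) \<in> star_rel Bl" for x y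
      using that unfolding star_rel_def star_adj_def dist0_def by auto
  qed (use r in \<open>simp_all add: dist0_def\<close>)
  then obtain e where e: "(c0, e) \<in> (star_rel Bl)\<^sup>*" "dist0 e = r"
    by blast
  obtain ps where ps: "ps \<noteq> []" "hd ps = c0" "last ps = e"
      "set ps \<subseteq> insert c0 (Range (star_rel Bl))"
    and steps: "\<And>i. Suc i < length ps \<Longrightarrow> (ps ! i, ps ! Suc i) \<in> star_rel Bl"
    by (rule rtrancl_imp_path_list[OF e(1)]) blast
  show thesis
  proof (rule that[OF ps(1,2)])
    show "set ps \<subseteq> Bl"
      using ps(4) c0 by (auto simp: star_rel_def)
    show "star_adj (ps ! i) (ps ! Suc i)" if "Suc i < length ps" for i
      using steps[OF that] by (simp add: star_rel_def)
    show "max (fst (last ps)) \<bar>snd (last ps) - snd c0\<bar> = r"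
      using ps(3) e(2) by (simp add: dist0_def)
  qed
qed

lemma disconnecting_set_contains_star_path:
  fixes S :: "pt set" and h :: int
  assumes d: "1 \<le> d" and N: "4 \<le> N"
    and disc: "disconnects N d S" and height: "\<And>x. x \<in> S \<Longrightarrow> \<bar>snd x\<bar> \<le> h"
  shows "\<exists>zs p. \<bar>zs\<bar> \<le> h \<and> star_path N d p \<and> hd p = vert zs \<and>
           last p \<in> sphere_inf N d (vert zs) (isqrt N) \<and> set p \<subseteq> Uset N d \<inter> S"
proof -
  define r where "r = isqrt N"
  have r: "1 \<le> r" "2 * r \<le> int N"
    using isqrt_bounds[OF N] unfolding r_def by auto
  define Bl where "Bl = strip_cells r S"
  obtain c0 c where c0: "c0 \<in> Bl" "fst c0 = 0" and c: "(c0, c) \<in> (star_rel Bl)\<^sup>*" "fst c = r"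
    using disconnecting_set_has_star_crossing[OF d r disc height] unfolding Bl_def by blast
  have "0 \<le> r" "fst c0 \<le> r" "r \<le> fst c"
    using r(1) c0(2) c(2) by auto
  then obtain ps where ps: "ps \<noteq> []" "hd ps = c0" "set ps \<subseteq> Bl"
      "\<And>i. Suc i < length ps \<Longrightarrow> star_adj (ps ! i) (ps ! Suc i)"
    and last: "max (fst (last ps)) \<bar>snd (last ps) - snd c0\<bar> = r"
    by (rule star_crossing_truncated[OF c0(1) c(1)]) blast
  have cols: "0 \<le> fst c \<and> fst c \<le> r" "slice_pt c \<in> S" if "c \<in> set ps" for c
    using that ps(3) unfolding Bl_def strip_cells_def by auto
  have last_ps: "last ps \<in> set ps"
    using ps(1) by simp
  define zs where "zs = snd c0"
  have "c0 = (0, zs)"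
    using c0(2) by (simp add: zs_def prod_eq_iff)
  then have vert_zs: "vert zs = slice_pt c0"
    by (simp add: slice_pt_vert)
  show ?thesis
  proof (intro exI conjI)
    show "\<bar>zs\<bar> \<le> h"
      using height[of "slice_pt c0"] c0(1) unfolding Bl_def strip_cells_def zs_def by simp
    show "star_path N d (map slice_pt ps)"
      using cols(1) r N by (intro star_path_map_slice_pt[OF d _ ps(1)] ps(4)) force+
    show "hd (map slice_pt ps) = vert zs"
      using ps(1,2) vert_zs by (simp add: hd_map)
    have "linf N d (vert zs) (slice_pt (last ps)) = r"
      using cols(1)[OF last_ps] c0(2) r last unfolding vert_zs
      by (simp add: linf_slice_pt[OF d] abs_minus_commute)
    then show "last (map slice_pt ps) \<in> sphere_inf N d (vert zs) (isqrt N)"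
      using ps(1) cols(1)[OF last_ps] r slice_pt_in_Ecyl[OF d, of "last ps" N]
      unfolding sphere_inf_def r_def by (simp add: last_map)
    show "set (map slice_pt ps) \<subseteq> Uset N d \<inter> S"
      using cols r slice_pt_in_Uset[OF d] unfolding r_def by force
  qed
qed

lemma AE_trace_contains_star_path:
  assumes "1 \<le> d" "4 \<le> N"
  shows "AE \<omega> in Pwalk N d. \<forall>n. TN N d \<omega> = enat n \<longrightarrow>
           (\<exists>zs p. \<bar>zs\<bar> \<le> int n \<and> star_path N d p \<and> hd p = vert zs \<and>
              last p \<in> sphere_inf N d (vert zs) (isqrt N) \<and> set p \<subseteq> Uset N d \<inter> trace N d \<omega> n)"
proof -
  have "0 < N"
    using assms(2) by simp
  from AE_Pwalk_start_height[OF this] show ?thesis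
  proof eventually_elim
    case (elim \<omega>)
    show ?case
      by (intro allI impI disconnecting_set_contains_star_path[OF assms] TN_eq_enat_disconnects)
        (auto intro: abs_snd_trace_le[OF elim])
  qed
qed

theorem lemma7p4:
  fixes d :: nat and \<gamma> :: real
  assumes "d \<ge> 2" and "\<gamma> > 0"
  shows "\<exists>c::nat. \<forall>N\<ge>c. AE \<omega> in Pwalk N d.
           (\<exists>n. TN N d \<omega> = enat n \<and> real n < \<gamma> * real N ^ (2 * d)) \<longrightarrow>
           (\<exists>zs p. \<bar>zs\<bar> \<le> int N ^ (2 * d + 1) \<and> star_path N d p \<and>
               hd p = vert zs \<and> last p \<in> sphere_inf N d (vert zs) (isqrt N) \<and>
               set p \<subseteq> Uset N d \<inter> trace N d \<omega> (the_enat (TN N d \<omega>)))"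
proof (intro exI[of _ "nat \<lceil>\<gamma>\<rceil> + 4"] allI impI)
  fix N :: nat
  assume N: "nat \<lceil>\<gamma>\<rceil> + 4 \<le> N"
  have bound: "int n \<le> int N ^ (2 * d + 1)" if "real n < \<gamma> * real N ^ (2 * d)" for n
  proof -
    have "\<gamma> * real N ^ (2 * d) \<le> real N * real N ^ (2 * d)"
      using N by (intro mult_right_mono) (linarith, simp)
    then have "real n \<le> real (N ^ (2 * d + 1))"
      using that by simp
    then have "n \<le> N ^ (2 * d + 1)"
      by (simp only: of_nat_le_iff)
    then show ?thesis
      by (metis of_nat_le_iff of_nat_power)
  qed
  have "1 \<le> d" "4 \<le> N"
    using assms(1) N by auto
  from AE_trace_contains_star_path[OF this] show "AE \<omega> in Pwalk N d.
           (\<exists>n. TN N d \<omega> = enat n \<and> real n < \<gamma> * real N ^ (2 * d)) \<longrightarrow>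
           (\<exists>zs p. \<bar>zs\<bar> \<le> int N ^ (2 * d + 1) \<and> star_path N d p \<and>
               hd p = vert zs \<and> last p \<in> sphere_inf N d (vert zs) (isqrt N) \<and>
               set p \<subseteq> Uset N d \<inter> trace N d \<omega> (the_enat (TN N d \<omega>)))"
    by eventually_elim (fastforce dest: bound intro: order_trans)
qed

end
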